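(* Consider the second-order chemical equilibrium reaction $A + B \leftrightarrow 2C$ with equilibrium constant $K_e = [C]^2/([A][B])$, and let $X = V(K_e xy - z^2)\subset\mathbb{P}^2$, where $x,y,z$ are the coordinates corresponding to the normalized concentrations $[A]/c,[B]/c,[C]/c$ with $c=[A]+[B]+[C]>0$. Then the ML degree of $X$ is $1$ if $K_e=4$, $0$ if $K_e=0$, and $2$ for all other values of $K_e$.
   Context: Let $\mathcal{H}=\{p\in\mathbb{P}^n : p_0p_1\cdots p_n(p_0+\dots+p_n)=0\}$. For data $u=(u_0,\dots,u_n)\in\mathbb{N}^{n+1}$ let $\mathcal{L}_u = \frac{p_0^{u_0}\cdots p_n^{u_n}}{(p_0+\dots+p_n)^{u_0+\dots+u_n}}$. The maximum likelihood (ML) degree of a projective variety $X\subset\mathbb{P}^n$ is the number of complex critical points of $\mathcal{L}_u$ on $X_{\mathrm{reg}}\setminus\mathcal{H}$ for (generic) $u$, where $X_{\mathrm{reg}}$ is the set of smooth points of $X$. *)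

theory Defs
  imports "HOL-Analysis.Analysis"
begin

text \<open>Points of P^2 are represented by nonzero vectors of complex^3 (homogeneous
coordinates); a projective variety is represented by its affine cone.
Polynomials in three variables are coefficient functions on exponent triples
with finite support.\<close>

type_synonym poly3 = "nat \<times> nat \<times> nat \<Rightarrow> complex"

definition mpoly3 :: "poly3 \<Rightarrow> bool" where
  "mpoly3 c \<longleftrightarrow> finite {m. c m \<noteq> 0}"

definition peval3 :: "poly3 \<Rightarrow> complex^3 \<Rightarrow> complex" where
  "peval3 c p = (\<Sum>m\<in>{m. c m \<noteq> 0}.
      c m * (p$0) ^ fst m * (p$1) ^ fst (snd m) * (p$2) ^ snd (snd m))"

definition pdiff3 :: "3 \<Rightarrow> poly3 \<Rightarrow> poly3" where
  "pdiff3 i c = (\<lambda>(a, b, d).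
     if i = 0 then of_nat (a + 1) * c (a + 1, b, d)
     else if i = 1 then of_nat (b + 1) * c (a, b + 1, d)
     else of_nat (d + 1) * c (a, b, d + 1))"

definition grad3 :: "poly3 \<Rightarrow> complex^3 \<Rightarrow> complex^3" where
  "grad3 c p = (\<chi> i. peval3 (pdiff3 i c) p)"

definition vanishing_ideal :: "(complex^3) set \<Rightarrow> poly3 set" where
  "vanishing_ideal X = {g. mpoly3 g \<and> (\<forall>q\<in>X. peval3 g q = 0)}"

definition reg_point :: "(complex^3) set \<Rightarrow> complex^3 \<Rightarrow> bool" where
  "reg_point X p \<longleftrightarrow> p \<noteq> 0 \<and> p \<in> X \<and> (\<exists>g\<in>vanishing_ideal X. grad3 g p \<noteq> 0)"

definition tangent_space :: "(complex^3) set \<Rightarrow> complex^3 \<Rightarrow> (complex^3) set" where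
  "tangent_space X p = {v. \<forall>g\<in>vanishing_ideal X. (\<Sum>i\<in>UNIV. grad3 g p $ i * v $ i) = 0}"

definition in_H :: "complex^3 \<Rightarrow> bool" where
  "in_H p \<longleftrightarrow> p$0 * p$1 * p$2 * (p$0 + p$1 + p$2) = 0"

definition lik :: "nat^3 \<Rightarrow> complex^3 \<Rightarrow> complex" where
  "lik u p = (\<Prod>i\<in>UNIV. (p$i) ^ (u$i)) / (p$0 + p$1 + p$2) ^ (u$0 + u$1 + u$2)"

definition crit_point :: "(complex^3) set \<Rightarrow> nat^3 \<Rightarrow> complex^3 \<Rightarrow> bool" where
  "crit_point X u p \<longleftrightarrow> reg_point X p \<and> \<not> in_H p \<and>
     (\<exists>D. (lik u has_derivative D) (at p) \<and> (\<forall>v\<in>tangent_space X p. D v = 0))"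

definition proj_pt :: "complex^3 \<Rightarrow> (complex^3) set" where
  "proj_pt p = {t *s p | t. t \<noteq> 0}"

definition crit_points :: "(complex^3) set \<Rightarrow> nat^3 \<Rightarrow> (complex^3) set set" where
  "crit_points X u = proj_pt ` {p. crit_point X u p}"

definition is_ML_degree :: "(complex^3) set \<Rightarrow> nat \<Rightarrow> bool" where
  "is_ML_degree X d \<longleftrightarrow> (\<exists>Q. mpoly3 Q \<and> Q \<noteq> (\<lambda>_. 0) \<and>
     (\<forall>u::nat^3. peval3 Q (\<chi> i. of_nat (u$i)) \<noteq> 0 \<longrightarrow>
        finite (crit_points X u) \<and> card (crit_points X u) = d))"

definition Xconic :: "real \<Rightarrow> (complex^3) set" where
  "Xconic K = {p. complex_of_real K * p$0 * p$1 - (p$2)^2 = 0}"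

end

theory Submission
  imports Defs
begin

(*
  Off H, a point (x, y, z) of the conic has K x y = z^2 nonzero, so K is nonzero and the point
  is a multiple of (1, r^2/K, r) with r = z/x. Every polynomial vanishing on the conic has its
  gradient orthogonal to the velocities of two curves in the conic through the point, so the
  tangent line is the kernel of the gradient (K y, K x, -2 z) of K x y - z^2. The point is
  therefore critical iff the logarithmic gradient of the likelihood is parallel to this
  gradient, i.e. iff (2 u0 + u2) r^2 + (u0 - u1) K r - (2 u1 + u2) K = 0. For generic data this
  quadratic has two distinct roots, and a root lies on H only if K = 4 and r = -2, which is on
  the hyperplane x + y + z = 0. For K = 0 the conic is the double line z^2 = 0 inside H.
*)

definition vec3 :: "'a \<Rightarrow> 'a \<Rightarrow> 'a \<Rightarrow> 'a ^ 3" where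
  "vec3 x y z = (\<chi> i. if i = 0 then x else if i = 1 then y else z)"

lemma vec3_nth [simp]: "vec3 x y z $ 0 = x" "vec3 x y z $ 1 = y" "vec3 x y z $ 2 = z"
  by (simp_all add: vec3_def)

lemma UNIV_3_eq: "(UNIV :: 3 set) = {0, 1, 2}"
proof -
  have "(3 :: 3) = 0" by simp
  then show ?thesis using UNIV_3 by auto
qed

lemma num3_cases: "(i :: 3) = 0 \<or> i = 1 \<or> i = 2"
  using UNIV_3_eq by blast

lemma all_3_iff: "(\<forall>i :: 3. P i) \<longleftrightarrow> P 0 \<and> P 1 \<and> P 2"
  by (metis num3_cases)

lemma vec3_eq_iff: "(v :: 'a ^ 3) = w \<longleftrightarrow> v$0 = w$0 \<and> v$1 = w$1 \<and> v$2 = w$2"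
  by (simp add: vec_eq_iff all_3_iff)

lemma sum_UNIV_3: "sum f (UNIV :: 3 set) = f 0 + f 1 + f 2"
  unfolding UNIV_3_eq by (simp add: ac_simps)

lemma prod_UNIV_3: "prod f (UNIV :: 3 set) = f 0 * f 1 * f 2"
  unfolding UNIV_3_eq by (simp add: ac_simps)

lemma has_derivative_vec_nth [derivative_intros]: "((\<lambda>x. x $ i) has_derivative (\<lambda>v. v $ i)) F"
  using bounded_linear_vec_nth by (rule bounded_linear_imp_has_derivative)

lemma kernel_subset_kernel_iff:
  fixes g w :: "'a :: field ^ 3"
  assumes "g$2 \<noteq> 0"
  shows "(\<forall>v. (\<Sum>i\<in>UNIV. g$i * v$i) = 0 \<longrightarrow> (\<Sum>i\<in>UNIV. w$i * v$i) = 0) \<longleftrightarrow>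
         w$0 * g$2 = w$2 * g$0 \<and> w$1 * g$2 = w$2 * g$1"
proof
  assume H: "\<forall>v. (\<Sum>i\<in>UNIV. g$i * v$i) = 0 \<longrightarrow> (\<Sum>i\<in>UNIV. w$i * v$i) = 0"
  have "w$0 * g$2 - w$2 * g$0 = 0"
    using H[rule_format, of "vec3 (g$2) 0 (- g$0)"] by (simp add: sum_UNIV_3 algebra_simps)
  moreover have "w$1 * g$2 - w$2 * g$1 = 0"
    using H[rule_format, of "vec3 0 (g$2) (- g$1)"] by (simp add: sum_UNIV_3 algebra_simps)
  ultimately show "w$0 * g$2 = w$2 * g$0 \<and> w$1 * g$2 = w$2 * g$1"
    by simp
next
  assume "w$0 * g$2 = w$2 * g$0 \<and> w$1 * g$2 = w$2 * g$1"
  then have eq: "g$2 * (\<Sum>i\<in>UNIV. w$i * v$i) = w$2 * (\<Sum>i\<in>UNIV. g$i * v$i)" for v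
    by (simp add: sum_UNIV_3 algebra_simps)
  show "\<forall>v. (\<Sum>i\<in>UNIV. g$i * v$i) = 0 \<longrightarrow> (\<Sum>i\<in>UNIV. w$i * v$i) = 0"
  proof (intro allI impI)
    fix v assume "(\<Sum>i\<in>UNIV. g$i * v$i) = 0"
    then have "g$2 * (\<Sum>i\<in>UNIV. w$i * v$i) = 0" using eq by simp
    then show "(\<Sum>i\<in>UNIV. w$i * v$i) = 0" using assms by simp
  qed
qed

definition mono3 :: "nat \<times> nat \<times> nat \<Rightarrow> complex^3 \<Rightarrow> complex" where
  "mono3 m p = p$0 ^ fst m * p$1 ^ fst (snd m) * p$2 ^ snd (snd m)"

lemma peval3_eq_sum:
  assumes "finite S" "\<And>m. m \<notin> S \<Longrightarrow> c m = 0"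
  shows "peval3 c p = (\<Sum>m\<in>S. c m * mono3 m p)"
proof -
  have "peval3 c p = (\<Sum>m | c m \<noteq> 0. c m * mono3 m p)"
    unfolding peval3_def mono3_def by (simp add: mult.assoc)
  also have "\<dots> = (\<Sum>m\<in>S. c m * mono3 m p)"
    by (rule sum.mono_neutral_left) (use assms in auto)
  finally show ?thesis .
qed

definition raise3 :: "3 \<Rightarrow> nat \<times> nat \<times> nat \<Rightarrow> nat \<times> nat \<times> nat" where
  "raise3 i = (\<lambda>(a, b, d).
     if i = 0 then (a + 1, b, d) else if i = 1 then (a, b + 1, d) else (a, b, d + 1))"

definition dmono3 :: "3 \<Rightarrow> nat \<times> nat \<times> nat \<Rightarrow> complex^3 \<Rightarrow> complex" where
  "dmono3 i = (\<lambda>(a, b, d) p.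
     if i = 0 then of_nat a * mono3 (a - 1, b, d) p
     else if i = 1 then of_nat b * mono3 (a, b - 1, d) p
     else of_nat d * mono3 (a, b, d - 1) p)"

lemma inj_raise3: "inj (raise3 i)"
  by (rule injI) (auto simp: raise3_def split: prod.splits if_splits)

lemma pdiff3_eq_0: "h (raise3 i m) = 0 \<Longrightarrow> pdiff3 i h m = 0"
  by (auto simp: pdiff3_def raise3_def split: prod.splits if_splits)

lemma pdiff3_mono3: "pdiff3 i h m * mono3 m p = h (raise3 i m) * dmono3 i (raise3 i m) p"
  by (auto simp: pdiff3_def raise3_def dmono3_def split: prod.splits)

lemma dmono3_eq_0: "m \<notin> range (raise3 i) \<Longrightarrow> dmono3 i m p = 0"
proof (rule ccontr)
  obtain a b d where m: "m = (a, b, d)" by (cases m)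
  assume "m \<notin> range (raise3 i)" "dmono3 i m p \<noteq> 0"
  then show False
    by (cases a; cases b; cases d) (auto simp: m dmono3_def raise3_def image_iff split: if_splits)
qed

lemma peval3_pdiff3:
  assumes "finite S" "\<And>m. m \<notin> S \<Longrightarrow> h m = 0"
  shows "peval3 (pdiff3 i h) p = (\<Sum>m\<in>S. h m * dmono3 i m p)"
proof -
  have "peval3 (pdiff3 i h) p = (\<Sum>m\<in>raise3 i -` S. pdiff3 i h m * mono3 m p)"
  proof (rule peval3_eq_sum)
    show "finite (raise3 i -` S)"
      using \<open>finite S\<close> by (rule finite_vimageI) (simp add: inj_raise3)
  qed (simp add: assms(2) pdiff3_eq_0)
  also have "\<dots> = (\<Sum>m\<in>raise3 i ` (raise3 i -` S). h m * dmono3 i m p)"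
    unfolding pdiff3_mono3
    by (rule sum.reindex[symmetric, unfolded comp_def]) (rule inj_on_subset[OF inj_raise3 subset_UNIV])
  also have "\<dots> = (\<Sum>m\<in>S. h m * dmono3 i m p)"
    by (rule sum.mono_neutral_left) (auto simp: \<open>finite S\<close> dmono3_eq_0)
  finally show ?thesis .
qed

lemma mono3_field_derivative:
  assumes "\<And>i. ((\<lambda>t. \<gamma> t $ i) has_field_derivative \<gamma>' $ i) (at t)"
  shows "((\<lambda>t. mono3 m (\<gamma> t)) has_field_derivative (\<Sum>i\<in>UNIV. dmono3 i m (\<gamma> t) * \<gamma>' $ i)) (at t)"
proof -
  obtain a b d where m: "m = (a, b, d)" by (cases m)
  show ?thesis
    unfolding m mono3_def dmono3_def sum_UNIV_3
    by (rule derivative_eq_intros assms refl)+ (simp add: algebra_simps)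
qed

lemma peval3_field_derivative:
  assumes "mpoly3 h" and "\<And>i. ((\<lambda>t. \<gamma> t $ i) has_field_derivative \<gamma>' $ i) (at t)"
  shows "((\<lambda>t. peval3 h (\<gamma> t)) has_field_derivative (\<Sum>i\<in>UNIV. grad3 h (\<gamma> t) $ i * \<gamma>' $ i)) (at t)"
proof -
  define S where "S = {m. h m \<noteq> 0}"
  have "finite S" using assms(1) unfolding mpoly3_def S_def .
  have S: "m \<notin> S \<Longrightarrow> h m = 0" for m unfolding S_def by simp
  have "((\<lambda>t. \<Sum>m\<in>S. h m * mono3 m (\<gamma> t)) has_field_derivative
      (\<Sum>m\<in>S. h m * (\<Sum>i\<in>UNIV. dmono3 i m (\<gamma> t) * \<gamma>' $ i))) (at t)"
    by (intro DERIV_sum DERIV_cmult mono3_field_derivative assms(2))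
  moreover have "(\<Sum>m\<in>S. h m * (\<Sum>i\<in>UNIV. dmono3 i m (\<gamma> t) * \<gamma>' $ i)) =
      (\<Sum>i\<in>UNIV. grad3 h (\<gamma> t) $ i * \<gamma>' $ i)"
  proof -
    have "(\<Sum>m\<in>S. h m * (\<Sum>i\<in>UNIV. dmono3 i m (\<gamma> t) * \<gamma>' $ i)) =
        (\<Sum>i\<in>UNIV. \<Sum>m\<in>S. h m * dmono3 i m (\<gamma> t) * \<gamma>' $ i)"
      by (subst sum.swap) (simp add: sum_distrib_left mult.assoc)
    also have "\<dots> = (\<Sum>i\<in>UNIV. grad3 h (\<gamma> t) $ i * \<gamma>' $ i)"
      by (simp add: grad3_def peval3_pdiff3[OF \<open>finite S\<close> S] sum_distrib_right)
    finally show ?thesis .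
  qed
  moreover have "peval3 h q = (\<Sum>m\<in>S. h m * mono3 m q)" for q
    by (rule peval3_eq_sum[OF \<open>finite S\<close> S])
  ultimately show ?thesis
    by simp
qed

lemma grad3_orthogonal_to_curve:
  assumes "h \<in> vanishing_ideal X" and "\<And>t. \<gamma> t \<in> X"
    and "\<And>i. ((\<lambda>t. \<gamma> t $ i) has_field_derivative \<gamma>' $ i) (at t)"
  shows "(\<Sum>i\<in>UNIV. grad3 h (\<gamma> t) $ i * \<gamma>' $ i) = 0"
proof -
  have "mpoly3 h" and "\<And>t. peval3 h (\<gamma> t) = 0"
    using assms(1,2) unfolding vanishing_ideal_def by auto
  then have "((\<lambda>t. 0) has_field_derivative (\<Sum>i\<in>UNIV. grad3 h (\<gamma> t) $ i * \<gamma>' $ i)) (at t)"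
    using peval3_field_derivative[OF \<open>mpoly3 h\<close> assms(3)] by simp
  then show ?thesis
    using DERIV_const DERIV_unique by blast
qed

definition conic_poly :: "real \<Rightarrow> poly3" where
  "conic_poly K = (\<lambda>m.
     if m = (1, 1, 0) then complex_of_real K else if m = (0, 0, 2) then -1 else 0)"

lemma conic_poly_in_vanishing_ideal: "conic_poly K \<in> vanishing_ideal (Xconic K)"
proof -
  have "peval3 (conic_poly K) p = complex_of_real K * p$0 * p$1 - (p$2)^2" for p
    by (subst peval3_eq_sum[where S = "{(1, 1, 0), (0, 0, 2)}"])
       (auto simp: conic_poly_def mono3_def)
  moreover have "mpoly3 (conic_poly K)"
    unfolding mpoly3_def
    by (rule finite_subset[of _ "{(1, 1, 0), (0, 0, 2)}"]) (auto simp: conic_poly_def)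
  ultimately show ?thesis
    by (simp add: vanishing_ideal_def Xconic_def)
qed

lemma grad3_conic_poly:
  "grad3 (conic_poly K) p = vec3 (complex_of_real K * p$1) (complex_of_real K * p$0) (-2 * p$2)"
proof -
  have "peval3 (pdiff3 i (conic_poly K)) p =
      (\<Sum>m\<in>{(1, 1, 0), (0, 0, 2)}. conic_poly K m * dmono3 i m p)" for i
    by (rule peval3_pdiff3) (auto simp: conic_poly_def)
  then show ?thesis
    by (simp add: vec3_eq_iff grad3_def conic_poly_def dmono3_def mono3_def)
qed

lemma not_in_H_iff: "\<not> in_H p \<longleftrightarrow> p$0 \<noteq> 0 \<and> p$1 \<noteq> 0 \<and> p$2 \<noteq> 0 \<and> p$0 + p$1 + p$2 \<noteq> 0"
  unfolding in_H_def by simp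

lemma grad3_vanishing_on_Xconic:
  assumes h: "h \<in> vanishing_ideal (Xconic K)" and p: "p \<in> Xconic K"
  shows "(\<Sum>i\<in>UNIV. grad3 h p $ i * p $ i) = 0"
    and "(\<Sum>i\<in>UNIV. grad3 h p $ i * vec3 (2 * p$0) 0 (p$2) $ i) = 0"
proof -
  have conic: "complex_of_real K * p$0 * p$1 = (p$2)^2"
    using p by (simp add: Xconic_def)
  \<comment> \<open>Scaling and the torus action \<open>(x, y, z) \<mapsto> (\<lambda>\<^sup>2 x, y, \<lambda> z)\<close> both preserve the conic.\<close>
  have "(\<Sum>i\<in>UNIV. grad3 h ((1 + 0) *s p) $ i * p $ i) = 0"
  proof (rule grad3_orthogonal_to_curve[OF h, where \<gamma> = "\<lambda>t. (1 + t) *s p"])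
    show "(1 + t) *s p \<in> Xconic K" for t
      using conic by (simp add: Xconic_def power2_eq_square algebra_simps)
    show "((\<lambda>t. ((1 + t) *s p) $ i) has_field_derivative p $ i) (at 0)" for i
      by (auto intro!: derivative_eq_intros)
  qed
  then show "(\<Sum>i\<in>UNIV. grad3 h p $ i * p $ i) = 0"
    by simp
  have "(\<Sum>i\<in>UNIV. grad3 h (vec3 (p$0 * (1 + 0)^2) (p$1) (p$2 * (1 + 0))) $ i *
      vec3 (2 * p$0) 0 (p$2) $ i) = 0"
  proof (rule grad3_orthogonal_to_curve[OF h,
        where \<gamma> = "\<lambda>t. vec3 (p$0 * (1 + t)^2) (p$1) (p$2 * (1 + t))"])
    show "vec3 (p$0 * (1 + t)^2) (p$1) (p$2 * (1 + t)) \<in> Xconic K" for t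
      using conic by (simp add: Xconic_def power2_eq_square algebra_simps)
    show "((\<lambda>t. vec3 (p$0 * (1 + t)^2) (p$1) (p$2 * (1 + t)) $ i)
        has_field_derivative vec3 (2 * p$0) 0 (p$2) $ i) (at 0)" for i
      using num3_cases[of i] by (auto intro!: derivative_eq_intros)
  qed
  moreover have "vec3 (p$0 * (1 + 0)^2) (p$1) (p$2 * (1 + 0)) = p"
    by (simp add: vec3_eq_iff)
  ultimately show "(\<Sum>i\<in>UNIV. grad3 h p $ i * vec3 (2 * p$0) 0 (p$2) $ i) = 0"
    by simp
qed

lemma tangent_space_Xconic:
  assumes "p \<in> Xconic K" and "\<not> in_H p"
  shows "tangent_space (Xconic K) p = {v. (\<Sum>i\<in>UNIV. grad3 (conic_poly K) p $ i * v $ i) = 0}"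
proof (intro set_eqI iffI)
  fix v assume "v \<in> tangent_space (Xconic K) p"
  then show "v \<in> {v. (\<Sum>i\<in>UNIV. grad3 (conic_poly K) p $ i * v $ i) = 0}"
    using conic_poly_in_vanishing_ideal unfolding tangent_space_def by blast
next
  define k where "k = complex_of_real K"
  have conic: "k * p$0 * p$1 = (p$2)^2"
    using assms(1) by (simp add: Xconic_def k_def)
  have nz: "p$0 \<noteq> 0" "p$1 \<noteq> 0" "p$2 \<noteq> 0"
    using assms(2) by (simp_all add: not_in_H_iff)
  fix v assume v: "v \<in> {v. (\<Sum>i\<in>UNIV. grad3 (conic_poly K) p $ i * v $ i) = 0}"
  show "v \<in> tangent_space (Xconic K) p"
    unfolding tangent_space_def
  proof (intro CollectI ballI)
    fix h assume h: "h \<in> vanishing_ideal (Xconic K)"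
    define G where "G = grad3 h p"
    have Gp: "G$0 * p$0 + G$1 * p$1 + G$2 * p$2 = 0" and Ge: "2 * G$0 * p$0 + G$2 * p$2 = 0"
      using grad3_vanishing_on_Xconic[OF h assms(1)] by (simp_all add: G_def sum_UNIV_3 mult_ac)
    have "p$0 * (G$0 * (-2 * p$2) - G$2 * (k * p$1)) =
        - p$2 * (2 * G$0 * p$0 + G$2 * p$2) + G$2 * ((p$2)^2 - k * p$0 * p$1)"
      by (simp add: algebra_simps power2_eq_square)
    then have "G$0 * (-2 * p$2) = G$2 * (k * p$1)"
      using Ge conic nz by simp
    moreover have "p$1 * (G$1 * (-2 * p$2) - G$2 * (k * p$0)) =
        p$2 * (2 * G$0 * p$0 + G$2 * p$2) - 2 * p$2 * (G$0 * p$0 + G$1 * p$1 + G$2 * p$2)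
        + G$2 * ((p$2)^2 - k * p$0 * p$1)"
      by (simp add: algebra_simps power2_eq_square)
    then have "G$1 * (-2 * p$2) = G$2 * (k * p$0)"
      using Ge Gp conic nz by simp
    ultimately have "\<forall>v. (\<Sum>i\<in>UNIV. grad3 (conic_poly K) p $ i * v $ i) = 0 \<longrightarrow>
        (\<Sum>i\<in>UNIV. G $ i * v $ i) = 0"
      using kernel_subset_kernel_iff[of "grad3 (conic_poly K) p" G] nz
      by (simp add: grad3_conic_poly k_def)
    then show "(\<Sum>i\<in>UNIV. grad3 h p $ i * v $ i) = 0"
      using v by (simp add: G_def)
  qed
qed

lemma of_nat_mult_power_diff1:
  "(x :: 'a :: field) \<noteq> 0 \<Longrightarrow> of_nat n * y * x ^ (n - 1) = of_nat n * y * x ^ n / x"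
  by (cases n) auto

definition lik_dlog :: "nat^3 \<Rightarrow> complex^3 \<Rightarrow> complex^3" where
  "lik_dlog u p = (\<chi> i. of_nat (u$i) / p$i - of_nat (u$0 + u$1 + u$2) / (p$0 + p$1 + p$2))"

lemma lik_has_derivative:
  assumes "\<not> in_H p"
  shows "(lik u has_derivative (\<lambda>v. lik u p * (\<Sum>i\<in>UNIV. lik_dlog u p $ i * v $ i))) (at p)"
proof -
  define S where "S = p$0 + p$1 + p$2"
  have nz: "p$0 \<noteq> 0" "p$1 \<noteq> 0" "p$2 \<noteq> 0" "S \<noteq> 0"
    using assms by (simp_all add: not_in_H_iff S_def)
  have "lik u = (\<lambda>q. (q$0 ^ u$0 * q$1 ^ u$1 * q$2 ^ u$2) / (q$0 + q$1 + q$2) ^ (u$0 + u$1 + u$2))"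
    by (simp add: lik_def prod_UNIV_3 fun_eq_iff)
  then show ?thesis
    apply simp
    apply (rule derivative_eq_intros refl)+
     apply (simp add: nz[unfolded S_def])
    apply (simp only: of_nat_mult_power_diff1 nz[unfolded S_def] not_False_eq_True)
    apply (simp add: fun_eq_iff lik_dlog_def sum_UNIV_3 S_def[symmetric])
    apply (simp add: nz field_simps)
    done
qed

lemma conic_log_gradient_parallel_iff:
  fixes a b c k x y z :: "'a :: field"
  assumes nz: "x \<noteq> 0" "y \<noteq> 0" "z \<noteq> 0" "x + y + z \<noteq> 0" and conic: "k * x * y = z^2"
  defines "n \<equiv> a + b + c" and "S \<equiv> x + y + z"
  shows "(a / x - n / S) * (-2 * z) = (c / z - n / S) * (k * y) \<and>
         (b / y - n / S) * (-2 * z) = (c / z - n / S) * (k * x) \<longleftrightarrow>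
         (2 * a + c) * z^2 + (a - b) * k * x * z - (2 * b + c) * k * x^2 = 0"
proof -
  \<comment> \<open>Since \<open>(a S - n x) + (b S - n y) + (c S - n z) = 0\<close>, both conditions reduce to \<open>W = 0\<close>.\<close>
  define W where "W = 2 * (a * S - n * x) + (c * S - n * z)"
  have "S \<noteq> 0" "k \<noteq> 0"
    using nz conic by (auto simp: S_def)
  have ky: "k * y = z^2 / x" and kx: "k * x = z^2 / y"
    using conic nz by (simp_all add: field_simps)
  have "(a / x - n / S) * (-2 * z) - (c / z - n / S) * (k * y) = - W * z / (x * S)"
    unfolding ky W_def using nz \<open>S \<noteq> 0\<close> by (simp add: field_simps power2_eq_square)
  then have "(a / x - n / S) * (-2 * z) = (c / z - n / S) * (k * y) \<longleftrightarrow> - W * z / (x * S) = 0"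
    by (metis eq_iff_diff_eq_0)
  then have first: "(a / x - n / S) * (-2 * z) = (c / z - n / S) * (k * y) \<longleftrightarrow> W = 0"
    using nz \<open>S \<noteq> 0\<close> by simp
  have "(b / y - n / S) * (-2 * z) - (c / z - n / S) * (k * x) =
      - (2 * (b * S - n * y) + (c * S - n * z)) * z / (y * S)"
    unfolding kx using nz \<open>S \<noteq> 0\<close> by (simp add: field_simps power2_eq_square)
  also have "2 * (b * S - n * y) + (c * S - n * z) = - W"
    unfolding W_def n_def S_def by (simp add: algebra_simps)
  finally have "(b / y - n / S) * (-2 * z) = (c / z - n / S) * (k * x) \<longleftrightarrow> - (- W) * z / (y * S) = 0"
    by (metis eq_iff_diff_eq_0)
  then have second: "(b / y - n / S) * (-2 * z) = (c / z - n / S) * (k * x) \<longleftrightarrow> W = 0"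
    using nz \<open>S \<noteq> 0\<close> by simp
  have "k * x * W = (2 * a + c) * z^2 + (a - b) * k * x * z - (2 * b + c) * k * x^2"
    unfolding W_def n_def S_def using conic by (simp add: algebra_simps power2_eq_square)
  then show ?thesis
    using first second nz \<open>k \<noteq> 0\<close> by auto
qed

definition crit_form :: "nat^3 \<Rightarrow> complex \<Rightarrow> complex \<Rightarrow> complex \<Rightarrow> complex" where
  "crit_form u k x z = (2 * of_nat (u$0) + of_nat (u$2)) * z^2
     + (of_nat (u$0) - of_nat (u$1)) * k * x * z - (2 * of_nat (u$1) + of_nat (u$2)) * k * x^2"

lemma crit_point_Xconic_iff:
  assumes X: "p \<in> Xconic K" and H: "\<not> in_H p"
  shows "crit_point (Xconic K) u p \<longleftrightarrow> crit_form u (complex_of_real K) (p$0) (p$2) = 0"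
proof -
  define g where "g = grad3 (conic_poly K) p"
  define w where "w = lik_dlog u p"
  have nz: "p$0 \<noteq> 0" "p$1 \<noteq> 0" "p$2 \<noteq> 0" "p$0 + p$1 + p$2 \<noteq> 0"
    using H by (simp_all add: not_in_H_iff)
  have conic: "complex_of_real K * p$0 * p$1 = (p$2)^2"
    using X by (simp add: Xconic_def)
  have "g$2 \<noteq> 0"
    using nz by (simp add: g_def grad3_conic_poly)
  then have "grad3 (conic_poly K) p \<noteq> 0" and "p \<noteq> 0"
    using nz by (auto simp: g_def)
  then have "reg_point (Xconic K) p"
    unfolding reg_point_def using X conic_poly_in_vanishing_ideal by blast
  moreover have "lik u p \<noteq> 0"
    using nz by (simp add: lik_def prod_UNIV_3)
  ultimately have "crit_point (Xconic K) u p \<longleftrightarrow>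
      (\<forall>v\<in>tangent_space (Xconic K) p. lik u p * (\<Sum>i\<in>UNIV. w$i * v$i) = 0)"
    unfolding crit_point_def w_def using H lik_has_derivative[OF H] has_derivative_unique by blast
  also have "\<dots> \<longleftrightarrow> (\<forall>v. (\<Sum>i\<in>UNIV. g$i * v$i) = 0 \<longrightarrow> (\<Sum>i\<in>UNIV. w$i * v$i) = 0)"
    using \<open>lik u p \<noteq> 0\<close> by (simp add: tangent_space_Xconic[OF X H] g_def)
  also have "\<dots> \<longleftrightarrow> w$0 * g$2 = w$2 * g$0 \<and> w$1 * g$2 = w$2 * g$1"
    using \<open>g$2 \<noteq> 0\<close> by (rule kernel_subset_kernel_iff)
  also have "\<dots> \<longleftrightarrow> crit_form u (complex_of_real K) (p$0) (p$2) = 0"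
    unfolding g_def w_def grad3_conic_poly lik_dlog_def vec_lambda_beta vec3_nth of_nat_add
      crit_form_def
    by (rule conic_log_gradient_parallel_iff[OF nz conic])
  finally show ?thesis .
qed

lemma proj_pt_smult: "t \<noteq> 0 \<Longrightarrow> proj_pt (t *s p) = proj_pt p"
  unfolding proj_pt_def
proof (intro set_eqI iffI)
  fix q assume "t \<noteq> 0" "q \<in> {s *s (t *s p) | s. s \<noteq> 0}"
  then obtain s where "s \<noteq> 0" "q = (s * t) *s p"
    by (auto simp: vector_smult_assoc)
  then show "q \<in> {s *s p | s. s \<noteq> 0}"
    using \<open>t \<noteq> 0\<close> by auto
next
  fix q assume "t \<noteq> 0" "q \<in> {s *s p | s. s \<noteq> 0}"
  then obtain s where "s \<noteq> 0" "q = s *s p"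
    by blast
  then have "q = (s / t) *s (t *s p)" and "s / t \<noteq> 0"
    using \<open>t \<noteq> 0\<close> by (simp_all add: vector_smult_assoc)
  then show "q \<in> {s *s (t *s p) | s. s \<noteq> 0}"
    by blast
qed

lemma proj_pt_eq_imp_smult: "proj_pt p = proj_pt q \<Longrightarrow> \<exists>t. p = t *s q"
proof -
  assume "proj_pt p = proj_pt q"
  moreover have "p \<in> proj_pt p"
    unfolding proj_pt_def by (auto intro!: exI[of _ 1])
  ultimately show ?thesis
    unfolding proj_pt_def by blast
qed

lemma in_H_smult: "t \<noteq> 0 \<Longrightarrow> in_H (t *s p) \<longleftrightarrow> in_H p"
  by (simp add: in_H_def distrib_left[symmetric])

definition conic_pt :: "complex \<Rightarrow> complex \<Rightarrow> complex^3" where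
  "conic_pt k r = vec3 1 (r^2 / k) r"

lemma conic_pt_in_Xconic: "K \<noteq> 0 \<Longrightarrow> conic_pt (complex_of_real K) r \<in> Xconic K"
  by (simp add: conic_pt_def Xconic_def)

lemma Xconic_eq_smult_conic_pt:
  assumes "p \<in> Xconic K" "K \<noteq> 0" "p$0 \<noteq> 0"
  shows "p = p$0 *s conic_pt (complex_of_real K) (p$2 / p$0)"
  using assms by (simp add: vec3_eq_iff conic_pt_def Xconic_def field_simps power2_eq_square)

lemma crit_form_homogeneous: "crit_form u k (t * x) (t * z) = t^2 * crit_form u k x z"
  by (simp add: crit_form_def algebra_simps power2_eq_square)

definition crit_params :: "nat^3 \<Rightarrow> complex \<Rightarrow> complex set" where
  "crit_params u k = {r. crit_form u k 1 r = 0 \<and> \<not> in_H (conic_pt k r)}"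

lemma crit_points_Xconic:
  assumes "K \<noteq> 0"
  defines "k \<equiv> complex_of_real K"
  shows "crit_points (Xconic K) u = (\<lambda>r. proj_pt (conic_pt k r)) ` crit_params u k"
proof -
  have crit: "crit_point (Xconic K) u p \<longleftrightarrow>
      p \<in> Xconic K \<and> \<not> in_H p \<and> crit_form u k (p$0) (p$2) = 0" for p
    using crit_point_Xconic_iff by (auto simp: crit_point_def reg_point_def k_def)
  show ?thesis
    unfolding crit_points_def
  proof (intro set_eqI iffI)
    fix P assume "P \<in> proj_pt ` {p. crit_point (Xconic K) u p}"
    then obtain p where P: "P = proj_pt p"
      and p: "p \<in> Xconic K" "\<not> in_H p" "crit_form u k (p$0) (p$2) = 0"
      using crit by blast
    define r where "r = p$2 / p$0"
    have "p$0 \<noteq> 0" using p(2) by (simp add: not_in_H_iff)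
    have p_eq: "p = p$0 *s conic_pt k r"
      unfolding k_def r_def using Xconic_eq_smult_conic_pt[OF p(1) assms(1) \<open>p$0 \<noteq> 0\<close>] .
    have "crit_form u k (p$0) (p$2) = (p$0)^2 * crit_form u k 1 r"
      using crit_form_homogeneous[of u k "p$0" 1 r] \<open>p$0 \<noteq> 0\<close> by (simp add: r_def)
    then have "crit_form u k 1 r = 0"
      using p(3) \<open>p$0 \<noteq> 0\<close> by simp
    moreover have "\<not> in_H (conic_pt k r)"
      using p(2) p_eq in_H_smult[OF \<open>p$0 \<noteq> 0\<close>] by metis
    moreover have "P = proj_pt (conic_pt k r)"
      unfolding P by (subst p_eq) (rule proj_pt_smult[OF \<open>p$0 \<noteq> 0\<close>])
    ultimately show "P \<in> (\<lambda>r. proj_pt (conic_pt k r)) ` crit_params u k"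
      by (auto simp: crit_params_def)
  next
    fix P assume "P \<in> (\<lambda>r. proj_pt (conic_pt k r)) ` crit_params u k"
    then obtain r where "P = proj_pt (conic_pt k r)" "crit_form u k 1 r = 0" "\<not> in_H (conic_pt k r)"
      by (auto simp: crit_params_def)
    moreover have "conic_pt k r \<in> Xconic K"
      unfolding k_def using assms(1) by (rule conic_pt_in_Xconic)
    ultimately show "P \<in> proj_pt ` {p. crit_point (Xconic K) u p}"
      using crit by (auto simp: conic_pt_def)
  qed
qed

lemma inj_proj_pt_conic_pt: "inj (\<lambda>r. proj_pt (conic_pt k r))"
proof (rule injI)
  fix r s assume "proj_pt (conic_pt k r) = proj_pt (conic_pt k s)"
  then obtain t where "conic_pt k r = t *s conic_pt k s"
    using proj_pt_eq_imp_smult by blast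
  then show "r = s"
    by (simp add: vec3_eq_iff conic_pt_def)
qed

lemma complex_quadratic_roots:
  fixes A B C :: complex
  assumes "A \<noteq> 0" "B^2 - 4 * A * C \<noteq> 0"
  obtains r1 r2 where "r1 \<noteq> r2" "{r. A * r^2 + B * r + C = 0} = {r1, r2}"
proof -
  define s where "s = csqrt (B^2 - 4 * A * C)"
  have s: "s^2 = B^2 - 4 * A * C" "s \<noteq> 0"
    using assms(2) by (simp_all add: s_def)
  define r1 where "r1 = (- B + s) / (2 * A)"
  define r2 where "r2 = (- B - s) / (2 * A)"
  have "4 * A * (A * r^2 + B * r + C) = 4 * A^2 * (r - r1) * (r - r2)" for r
    unfolding r1_def r2_def using assms(1) s(1)
    by (simp add: field_simps power2_eq_square) algebra
  then have "A * r^2 + B * r + C = 0 \<longleftrightarrow> r = r1 \<or> r = r2" for r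
    using assms(1)
    by (metis (no_types, lifting) mult_eq_0_iff power_eq_0_iff right_minus_eq zero_neq_numeral)
  moreover have "r1 \<noteq> r2"
    using s(2) assms(1) by (simp add: r1_def r2_def divide_cancel_right)
  ultimately show ?thesis
    using that by blast
qed

lemma in_H_conic_pt_root_iff:
  assumes "k \<noteq> 0" "u$2 \<noteq> 0" "crit_form u k 1 r = 0"
  shows "in_H (conic_pt k r) \<longleftrightarrow> k = 4 \<and> r = -2"
proof
  define a b c :: complex where "a = of_nat (u$0)" and "b = of_nat (u$1)" and "c = of_nat (u$2)"
  have "2 * b + c = of_nat (2 * u$1 + u$2)" "a + b + c = of_nat (u$0 + u$1 + u$2)"
    by (simp_all add: a_def b_def c_def)
  then have "2 * b + c \<noteq> 0" "a + b + c \<noteq> 0"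
    using assms(2) by (simp_all only: of_nat_eq_0_iff)
  have root: "(2 * a + c) * r^2 + (a - b) * k * r - (2 * b + c) * k = 0"
    using assms(3) by (simp add: crit_form_def a_def b_def c_def)
  assume "in_H (conic_pt k r)"
  then have "r = 0 \<or> 1 + r^2 / k + r = 0"
    using assms(1) by (simp add: in_H_def conic_pt_def)
  moreover have "1 + r^2 / k + r = 0 \<longleftrightarrow> k + r^2 + k * r = 0"
    using assms(1) by (simp add: field_simps)
  moreover have "r \<noteq> 0"
    using root \<open>2 * b + c \<noteq> 0\<close> assms(1) by auto
  ultimately have on_line: "k + r^2 + k * r = 0"
    by blast
  then have "k * (a + b + c) * (r + 2) = 0"
    using root by algebra
  then have "r = -2"
    using assms(1) \<open>a + b + c \<noteq> 0\<close> by (simp add: add_eq_0_iff2)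
  then show "k = 4 \<and> r = -2"
    using on_line by (simp add: power2_eq_square)
next
  assume "k = 4 \<and> r = -2"
  then show "in_H (conic_pt k r)"
    by (simp add: in_H_def conic_pt_def)
qed

lemma card_crit_points_Xconic:
  assumes "K \<noteq> 0" "u$2 \<noteq> 0"
    and "(of_nat (u$0) - of_nat (u$1))^2 * complex_of_real K
         + 4 * (2 * of_nat (u$0) + of_nat (u$2)) * (2 * of_nat (u$1) + of_nat (u$2)) \<noteq> 0"
  shows "finite (crit_points (Xconic K) u) \<and>
         card (crit_points (Xconic K) u) = (if K = 4 then 1 else 2)"
proof -
  define k where "k = complex_of_real K"
  define A B C :: complex where "A = 2 * of_nat (u$0) + of_nat (u$2)"
    and "B = (of_nat (u$0) - of_nat (u$1)) * k" and "C = - (2 * of_nat (u$1) + of_nat (u$2)) * k"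
  have "k \<noteq> 0" using assms(1) by (simp add: k_def)
  have k4: "k = 4 \<longleftrightarrow> K = 4"
    unfolding k_def by (metis of_real_eq_iff of_real_numeral)
  have "A = of_nat (2 * u$0 + u$2)"
    by (simp add: A_def)
  then have "A \<noteq> 0"
    using assms(2) by (simp only: of_nat_eq_0_iff)
  moreover have "B^2 - 4 * A * C \<noteq> 0"
  proof -
    have "B^2 - 4 * A * C = k * ((of_nat (u$0) - of_nat (u$1))^2 * k
        + 4 * (2 * of_nat (u$0) + of_nat (u$2)) * (2 * of_nat (u$1) + of_nat (u$2)))"
      by (simp add: A_def B_def C_def algebra_simps power2_eq_square)
    then show ?thesis
      using assms(3) \<open>k \<noteq> 0\<close> by (simp add: k_def)
  qed
  ultimately obtain r1 r2 where "r1 \<noteq> r2" and roots: "{r. A * r^2 + B * r + C = 0} = {r1, r2}"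
    by (rule complex_quadratic_roots)
  have crit_form_eq: "crit_form u k 1 r = A * r^2 + B * r + C" for r
    by (simp add: crit_form_def A_def B_def C_def algebra_simps)
  then have params: "crit_params u k = {r1, r2} - {r. k = 4 \<and> r = -2}"
    using roots in_H_conic_pt_root_iff[OF \<open>k \<noteq> 0\<close> assms(2)] by (auto simp: crit_params_def)
  have "crit_points (Xconic K) u = (\<lambda>r. proj_pt (conic_pt k r)) ` ({r1, r2} - {r. k = 4 \<and> r = -2})"
    using crit_points_Xconic[OF assms(1), of u] by (simp only: k_def[symmetric] params)
  moreover have "card ({r1, r2} - {r. k = 4 \<and> r = -2}) = (if K = 4 then 1 else 2)"
  proof (cases "K = 4")
    case True
    then have "crit_form u k 1 (-2) = 0"
      using k4 by (simp add: crit_form_def algebra_simps)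
    then have "-2 \<in> {r. A * r^2 + B * r + C = 0}"
      by (simp add: crit_form_eq)
    then have "-2 \<in> {r1, r2}"
      unfolding roots .
    then show ?thesis
      using True \<open>r1 \<noteq> r2\<close> k4 by auto
  next
    case False
    then show ?thesis
      using \<open>r1 \<noteq> r2\<close> k4 by simp
  qed
  ultimately show ?thesis
    by (simp add: card_image[OF inj_on_subset[OF inj_proj_pt_conic_pt subset_UNIV]])
qed

(* u2 times the discriminant of the critical quadratic divided by K; u2 > 0 also keeps the
   outer coefficients of the quadratic nonzero. *)
definition genericity_poly :: "real \<Rightarrow> poly3" where
  "genericity_poly K = (\<lambda>m.
     if m = (2, 0, 1) \<or> m = (0, 2, 1) then complex_of_real K
     else if m = (1, 1, 1) then 16 - 2 * complex_of_real K
     else if m = (1, 0, 2) \<or> m = (0, 1, 2) then 8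
     else if m = (0, 0, 3) then 4 else 0)"

lemma genericity_poly_support:
  "{m. genericity_poly K m \<noteq> 0} \<subseteq> {(2, 0, 1), (0, 2, 1), (1, 1, 1), (1, 0, 2), (0, 1, 2), (0, 0, 3)}"
  by (auto simp: genericity_poly_def split: if_splits)

lemma peval3_genericity_poly:
  "peval3 (genericity_poly K) p =
     p$2 * ((p$0 - p$1)^2 * complex_of_real K + 4 * (2 * p$0 + p$2) * (2 * p$1 + p$2))"
  using genericity_poly_support[of K]
  by (subst peval3_eq_sum[where S = "{(2, 0, 1), (0, 2, 1), (1, 1, 1), (1, 0, 2), (0, 1, 2), (0, 0, 3)}"])
     (auto simp: genericity_poly_def mono3_def algebra_simps power2_eq_square power3_eq_cube)

lemma genericity_poly_nonzero: "mpoly3 (genericity_poly K)" "genericity_poly K \<noteq> (\<lambda>_. 0)"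
proof -
  show "mpoly3 (genericity_poly K)"
    unfolding mpoly3_def using genericity_poly_support by (rule finite_subset) simp
  have "genericity_poly K (0, 0, 3) = 4"
    by (simp add: genericity_poly_def)
  then show "genericity_poly K \<noteq> (\<lambda>_. 0)"
    by auto
qed

lemma crit_points_Xconic_0: "crit_points (Xconic 0) u = {}"
  by (auto simp: crit_points_def crit_point_def reg_point_def Xconic_def not_in_H_iff)

lemma is_ML_degree_Xconic: "is_ML_degree (Xconic K) (if K = 0 then 0 else if K = 4 then 1 else 2)"
  unfolding is_ML_degree_def
proof (intro exI[of _ "genericity_poly K"] conjI allI impI genericity_poly_nonzero)
  fix u :: "nat^3"
  assume "peval3 (genericity_poly K) (\<chi> i. of_nat (u$i)) \<noteq> 0"
  then have "u$2 \<noteq> 0"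
    and "(of_nat (u$0) - of_nat (u$1))^2 * complex_of_real K
         + 4 * (2 * of_nat (u$0) + of_nat (u$2)) * (2 * of_nat (u$1) + of_nat (u$2)) \<noteq> 0"
    by (simp_all add: peval3_genericity_poly)
  then have "finite (crit_points (Xconic K) u) \<and>
      card (crit_points (Xconic K) u) = (if K = 0 then 0 else if K = 4 then 1 else 2)"
    using card_crit_points_Xconic[of K u] by (cases "K = 0") (simp_all add: crit_points_Xconic_0)
  then show "finite (crit_points (Xconic K) u)"
    and "card (crit_points (Xconic K) u) = (if K = 0 then 0 else if K = 4 then 1 else 2)"
    by simp_all
qed

theorem mainTheorem2:
  fixes K :: real
  shows "(K = 4 \<longrightarrow> is_ML_degree (Xconic K) 1) \<and>
         (K = 0 \<longrightarrow> is_ML_degree (Xconic K) 0) \<and>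
         (K \<noteq> 4 \<and> K \<noteq> 0 \<longrightarrow> is_ML_degree (Xconic K) 2)"
  using is_ML_degree_Xconic[of K] by auto

end
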